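(* In the setting of the context, fix a feasible basis and distinct integers $r,s$ with $0\le r,s\le d$. The following are equivalent: (i) in $\Delta$, vertex $r$ is adjacent to vertex $s$ and to no other vertex; (ii) $a^*_r\ne\theta^*_0$ and $$u_i(\theta_s)=u_i(\theta_r)\,\frac{\theta^*_i-a^*_r}{\theta^*_0-a^*_r}\qquad(0\le i\le d).$$
   Context: Let $\mathbb F$ be a field, $d\ge1$, $V$ an $\mathbb F$-vector space of dimension $d+1$, $\mathcal A=\mathrm{End}(V)$ with identity $I$. Let $E^*_0,\dots,E^*_d\in\mathcal A$ satisfy $E^*_iE^*_j=\delta_{i,j}E^*_i$, $\mathrm{rank}(E^*_i)=1$. Let $A\in\mathcal A$ satisfy $E^*_iAE^*_j=0$ if $|i-j|>1$ and $\neq0$ if $|i-j|=1$. Assume $A$ has $d+1$ distinct eigenvalues $\theta_0,\dots,\theta_d\in\mathbb F$ with primitive idempotents $E_i=\prod_{j\ne i}\frac{A-\theta_jI}{\theta_i-\theta_j}$. Let $\theta^*_i\in\mathbb F$, $A^*=\sum_i\theta^*_iE^*_i$, $a^*_i=\mathrm{tr}(E_iA^* )$. Let $\Delta$ be the graph on $\{0,\dots,d\}$ with $i\sim j$ iff $i\ne j$ and $E_iA^*E_j\ne0$. A basis $v_0,\dots,v_d$ of $V$ is feasible if $v_i\in E^*_iV$ for all $i$; then $Av_i=b_{i-1}v_{i-1}+a_iv_i+c_{i+1}v_{i+1}$ ($v_{-1}=v_{d+1}=0$), with $a_i=\mathrm{tr}(E^*_iA)$, nonzero $b_0,\dots,b_{d-1}$,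 $c_1,\dots,c_d$, and $b_d=c_0=0$. Define $u_0,\dots,u_{d+1}\in\mathbb F[\lambda]$ by $u_{-1}=0$, $u_0=1$, $\lambda u_i=c_iu_{i-1}+a_iu_i+b_iu_{i+1}$ $(0\le i\le d-1)$, $\lambda u_d=c_du_{d-1}+a_du_d+u_{d+1}/(b_0\cdots b_{d-1})$. *)

theory Defs
  imports "Jordan_Normal_Form.DL_Rank" "Jordan_Normal_Form.Char_Poly"
begin

definition trace_mat :: "'a::comm_ring_1 mat \<Rightarrow> 'a" where
  "trace_mat M = (\<Sum>i<dim_row M. M $$ (i, i))"

definition prim_idem :: "'a::field mat \<Rightarrow> (nat \<Rightarrow> 'a) \<Rightarrow> nat \<Rightarrow> nat \<Rightarrow> 'a mat" where
  "prim_idem A \<theta> d i =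
     foldr (\<lambda>j M. ((1 / (\<theta> i - \<theta> j)) \<cdot>\<^sub>m (A - \<theta> j \<cdot>\<^sub>m 1\<^sub>m (d+1))) * M)
       (filter (\<lambda>j. j \<noteq> i) [0..<d+1]) (1\<^sub>m (d+1))"

definition dual_mat :: "nat \<Rightarrow> (nat \<Rightarrow> 'a::field) \<Rightarrow> (nat \<Rightarrow> 'a mat) \<Rightarrow> 'a mat" where
  "dual_mat d \<theta>s Es = foldr (\<lambda>i M. \<theta>s i \<cdot>\<^sub>m Es i + M) [0..<d+1] (0\<^sub>m (d+1) (d+1))"

text \<open>The polynomials u_0,...,u_{d+1}: u_{-1}=0, u_0=1,
  lambda u_i = c_i u_{i-1} + a_i u_i + b_i u_{i+1}  (0 <= i <= d-1),
  lambda u_d = c_d u_{d-1} + a_d u_d + u_{d+1}/(b_0 ... b_{d-1}).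
  Here denominator i is the coefficient of u_{i+1}.\<close>
definition u_den :: "nat \<Rightarrow> (nat \<Rightarrow> 'a::field) \<Rightarrow> nat \<Rightarrow> 'a" where
  "u_den d b i = (if i < d then b i else 1 / (\<Prod>k<d. b k))"

fun upoly :: "nat \<Rightarrow> (nat \<Rightarrow> 'a::field) \<Rightarrow> (nat \<Rightarrow> 'a) \<Rightarrow> (nat \<Rightarrow> 'a) \<Rightarrow> nat \<Rightarrow> 'a poly" where
  "upoly d a b c 0 = 1"
| "upoly d a b c (Suc 0) = smult (1 / u_den d b 0) [:- a 0, 1:]"
| "upoly d a b c (Suc (Suc i)) =
     smult (1 / u_den d b (Suc i))
       ([:- a (Suc i), 1:] * upoly d a b c (Suc i) - smult (c (Suc i)) (upoly d a b c i))"

end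

theory Submission
  imports Defs
begin

text \<open>
  Everything is computed in coordinates with respect to the feasible
  basis \<open>v\<^sub>0,\<dots>,v\<^sub>d\<close>.  There \<open>A\<close> acts by the tridiagonal matrix with entries
  \<open>b\<^sub>i, a\<^sub>i, c\<^sub>i\<close> (and \<open>b\<^sub>i, c\<^sub>i \<noteq> 0\<close> since \<open>E\<^sup>*\<^sub>iAE\<^sup>*\<^sub>j \<noteq> 0\<close> for \<open>|i-j| = 1\<close>), and
  \<open>A\<^sup>*\<close> acts diagonally by the \<open>\<theta>\<^sup>*\<^sub>i\<close>.  The three-term recurrence shows that
  \<open>y\<^sub>j = \<Sum>\<^sub>i u\<^sub>i(\<theta>\<^sub>j) v\<^sub>i\<close> is a \<open>\<theta>\<^sub>j\<close>-eigenvector of \<open>A\<close>, so \<open>E\<^sub>m y\<^sub>k = \<delta>\<^sub>m\<^sub>k y\<^sub>k\<close> and the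
  \<open>y\<^sub>j\<close> form a second basis.  Writing \<open>A\<^sup>* y\<^sub>j = \<Sum>\<^sub>k \<gamma>\<^sub>j\<^sub>k y\<^sub>k\<close> we get
  (a) \<open>E\<^sub>rA\<^sup>*E\<^sub>j \<noteq> 0 \<longleftrightarrow> \<gamma>\<^sub>j\<^sub>r \<noteq> 0\<close>, (b) \<open>tr(E\<^sub>rA\<^sup>*) = \<gamma>\<^sub>r\<^sub>r\<close> (trace computed in the basis
  \<open>y\<close>), (c) \<open>\<gamma>\<^sub>j\<^sub>r = 0 \<longleftrightarrow> \<gamma>\<^sub>r\<^sub>j = 0\<close>, because the tridiagonal matrix is symmetric for a
  diagonal weight form, making the eigen-coordinate vectors \<open>u(\<theta>\<^sub>j)\<close> orthogonal, and
  (d) in \<open>v\<close>-coordinates \<open>\<theta>\<^sup>*\<^sub>i u\<^sub>i(\<theta>\<^sub>r) = \<Sum>\<^sub>k \<gamma>\<^sub>r\<^sub>k u\<^sub>i(\<theta>\<^sub>k)\<close>.  By independence of the \<open>y\<^sub>k\<close>,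
  "\<open>r\<close> is adjacent exactly to \<open>s\<close>" then means \<open>\<theta>\<^sup>*\<^sub>i u\<^sub>i(\<theta>\<^sub>r) = \<gamma>\<^sub>r\<^sub>r u\<^sub>i(\<theta>\<^sub>r) + \<beta> u\<^sub>i(\<theta>\<^sub>s)\<close>
  with \<open>\<beta> \<noteq> 0\<close>, and evaluating at \<open>i = 0\<close> (where \<open>u\<^sub>0 = 1\<close>) forces \<open>\<beta> = \<theta>\<^sup>*\<^sub>0 - \<gamma>\<^sub>r\<^sub>r\<close>.
\<close>

section \<open>Linear combinations of indexed vector families\<close>

text \<open>\<open>comb d \<alpha> w = \<Sum>\<^sub>i\<^sub>\<le>\<^sub>d \<alpha>\<^sub>i w\<^sub>i\<close> among vectors of dimension \<open>d+1\<close>; a family is handled by its index function,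
  which avoids the set-based \<open>lincomb\<close> of the vector-space locale.\<close>
definition comb :: "nat \<Rightarrow> (nat \<Rightarrow> 'a::field) \<Rightarrow> (nat \<Rightarrow> 'a vec) \<Rightarrow> 'a vec" where
  "comb d \<alpha> w = vec (d+1) (\<lambda>k. \<Sum>i\<le>d. \<alpha> i * w i $ k)"

text \<open>The \<open>Suc d\<close> variants are needed because the simplifier normalizes \<open>d+1\<close> to \<open>Suc d\<close>.\<close>
lemma comb_carrier [simp]: "comb d \<alpha> w \<in> carrier_vec (d+1)"
  and comb_carrier_Suc [simp]: "comb d \<alpha> w \<in> carrier_vec (Suc d)"
  and comb_dim [simp]: "dim_vec (comb d \<alpha> w) = d+1"
  by (simp_all add: comb_def)

lemma comb_index [simp]: "k < d+1 \<Longrightarrow> comb d \<alpha> w $ k = (\<Sum>i\<le>d. \<alpha> i * w i $ k)"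
  by (simp add: comb_def)

lemma comb_cong: "(\<And>i. i \<le> d \<Longrightarrow> \<alpha> i = \<beta> i) \<Longrightarrow> comb d \<alpha> w = comb d \<beta> w"
  unfolding comb_def by (intro eq_vecI) auto

lemma comb_cong_family: "(\<And>i. i \<le> d \<Longrightarrow> w i = w' i) \<Longrightarrow> comb d \<alpha> w = comb d \<alpha> w'"
  unfolding comb_def by (intro eq_vecI) auto

lemma comb_zero: "comb d (\<lambda>i. 0) w = 0\<^sub>v (d+1)"
  by (rule eq_vecI) auto

lemma comb_add: "comb d \<alpha> w + comb d \<beta> w = comb d (\<lambda>i. \<alpha> i + \<beta> i) w"
  by (rule eq_vecI) (auto simp: sum.distrib algebra_simps)

lemma comb_diff: "comb d (\<lambda>i. \<alpha> i - \<beta> i) w = comb d \<alpha> w - comb d \<beta> w"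
  by (rule eq_vecI) (auto simp: sum_subtractf algebra_simps)

lemma comb_scale: "comb d (\<lambda>i. x * \<alpha> i) w = x \<cdot>\<^sub>v comb d \<alpha> w"
  by (rule eq_vecI) (auto simp: sum_distrib_left mult_ac)

lemma comb_comb: "comb d \<alpha> (\<lambda>j. comb d (\<beta> j) w) = comb d (\<lambda>i. \<Sum>j\<le>d. \<alpha> j * \<beta> j i) w"
proof (rule eq_vecI)
  fix k assume "k < dim_vec (comb d (\<lambda>i. \<Sum>j\<le>d. \<alpha> j * \<beta> j i) w)"
  hence k: "k < d+1" by simp
  have "(\<Sum>j\<le>d. \<alpha> j * (\<Sum>i\<le>d. \<beta> j i * w i $ k)) = (\<Sum>i\<le>d. (\<Sum>j\<le>d. \<alpha> j * \<beta> j i) * w i $ k)"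
    unfolding sum_distrib_left sum_distrib_right by (subst sum.swap) (simp add: mult_ac)
  thus "comb d \<alpha> (\<lambda>j. comb d (\<beta> j) w) $ k = comb d (\<lambda>i. \<Sum>j\<le>d. \<alpha> j * \<beta> j i) w $ k"
    using k by simp
qed simp

lemma comb_single:
  assumes m: "m \<le> d" and w: "w m \<in> carrier_vec (d+1)"
  shows "comb d (\<lambda>k. if k = m then x else 0) w = x \<cdot>\<^sub>v w m"
proof (rule eq_vecI)
  fix i assume "i < dim_vec (x \<cdot>\<^sub>v w m)"
  hence i: "i < d+1" using w by simp
  have "(\<Sum>k\<le>d. (if k = m then x else 0) * w k $ i) = (\<Sum>k\<le>d. if k = m then x * w m $ i else 0)"
    by (rule sum.cong) auto
  thus "comb d (\<lambda>k. if k = m then x else 0) w $ i = (x \<cdot>\<^sub>v w m) $ i" using i m w by simp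
qed (use w in simp)

lemma comb_single_family:
  assumes z: "z \<in> carrier_vec (d+1)" and m: "m \<le> d"
  shows "comb d \<alpha> (\<lambda>k. if k = m then z else 0\<^sub>v (d+1)) = \<alpha> m \<cdot>\<^sub>v z"
proof (rule eq_vecI)
  fix i assume "i < dim_vec (\<alpha> m \<cdot>\<^sub>v z)"
  hence i: "i < d+1" using z by simp
  have "(\<Sum>k\<le>d. \<alpha> k * (if k = m then z else 0\<^sub>v (d+1)) $ i) = (\<Sum>k\<le>d. if k = m then \<alpha> m * z $ i else 0)"
    by (rule sum.cong) (use i in auto)
  thus "comb d \<alpha> (\<lambda>k. if k = m then z else 0\<^sub>v (d+1)) $ i = (\<alpha> m \<cdot>\<^sub>v z) $ i" using i m z by simp
qed (use z in simp)

lemma mat_comb: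
  assumes M: "M \<in> carrier_mat (d+1) (d+1)" and w: "\<And>i. i \<le> d \<Longrightarrow> w i \<in> carrier_vec (d+1)"
  shows "M *\<^sub>v comb d \<alpha> w = comb d \<alpha> (\<lambda>i. M *\<^sub>v w i)"
proof (rule eq_vecI)
  fix k assume "k < dim_vec (comb d \<alpha> (\<lambda>i. M *\<^sub>v w i))"
  hence k: "k < d+1" by simp
  have wd: "\<And>i. i \<le> d \<Longrightarrow> dim_vec (w i) = d+1" using w by auto
  have "(M *\<^sub>v comb d \<alpha> w) $ k = (\<Sum>l<d+1. M $$ (k,l) * (\<Sum>i\<le>d. \<alpha> i * w i $ l))"
    using M k by (simp del: sum.lessThan_Suc add: scalar_prod_def atLeast0LessThan)
  also have "\<dots> = (\<Sum>i\<le>d. \<alpha> i * (\<Sum>l<d+1. M $$ (k,l) * w i $ l))"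
    unfolding sum_distrib_left by (subst sum.swap) (simp add: mult_ac)
  also have "\<dots> = (\<Sum>i\<le>d. \<alpha> i * (M *\<^sub>v w i) $ k)"
    by (intro sum.cong refl) (use M k wd in \<open>simp del: sum.lessThan_Suc add: scalar_prod_def atLeast0LessThan\<close>)
  finally show "(M *\<^sub>v comb d \<alpha> w) $ k = comb d \<alpha> (\<lambda>i. M *\<^sub>v w i) $ k" using k by simp
qed (use M in simp)

lemma unit_vec_comb:
  assumes x: "x \<in> carrier_vec (d+1)"
  shows "x = comb d (\<lambda>l. x $ l) (\<lambda>l. unit_vec (d+1) l)"
proof (rule eq_vecI)
  fix k assume "k < dim_vec (comb d (\<lambda>l. x $ l) (\<lambda>l. unit_vec (d+1) l))"
  hence k: "k < d+1" by simp
  have "(\<Sum>l\<le>d. x $ l * unit_vec (d+1) l $ k) = (\<Sum>l\<le>d. if l = k then x $ k else 0)"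
    by (rule sum.cong) (use k in auto)
  also have "\<dots> = x $ k" using k by simp
  finally show "x $ k = comb d (\<lambda>l. x $ l) (\<lambda>l. unit_vec (d+1) l) $ k" using k by simp
qed (use x in simp)

lemma mat_zeroI:
  fixes M :: "'a::field mat"
  assumes M: "M \<in> carrier_mat n n" and z: "\<And>w. w \<in> carrier_vec n \<Longrightarrow> M *\<^sub>v w = 0\<^sub>v n"
  shows "M = 0\<^sub>m n n"
proof (rule eq_matI)
  fix i l assume "i < dim_row (0\<^sub>m n n)" "l < dim_col (0\<^sub>m n n)"
  hence il: "i < n" "l < n" by auto
  have "M $$ (i,l) = (M *\<^sub>v unit_vec n l) $ i" using M il by simp
  also have "\<dots> = 0" using z[of "unit_vec n l"] il by simp
  finally show "M $$ (i, l) = 0\<^sub>m n n $$ (i, l)" using il by simp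
qed (use M in auto)

lemma smult_mat_vec: "X \<in> carrier_mat n m \<Longrightarrow> w \<in> carrier_vec m \<Longrightarrow> (c \<cdot>\<^sub>m X) *\<^sub>v w = c \<cdot>\<^sub>v (X *\<^sub>v w)"
  by (intro eq_vecI) (auto simp: scalar_prod_def sum_distrib_left mult_ac)

lemma smult_nonzero_vec_eq_zero:
  fixes x :: "'a::field vec"
  assumes x: "x \<in> carrier_vec n" and nz: "x \<noteq> 0\<^sub>v n" and z: "t \<cdot>\<^sub>v x = 0\<^sub>v n"
  shows "t = 0"
proof (rule ccontr)
  assume t: "t \<noteq> 0"
  have "x = 0\<^sub>v n"
  proof (rule eq_vecI)
    fix i assume "i < dim_vec (0\<^sub>v n :: 'a vec)"
    hence i: "i < n" by simp
    have "t * x $ i = 0" using arg_cong[OF z, of "\<lambda>u. u $ i"] i x by simp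
    thus "x $ i = 0\<^sub>v n $ i" using t i by simp
  qed (use x in simp)
  with nz show False by simp
qed

lemma sum_atMost_if_ge1: "(\<Sum>i\<le>d. if i \<ge> 1 then f i else 0) = (\<Sum>i<d. f (Suc i) :: 'a::comm_monoid_add)"
  by (induction d) (auto simp: sum.atMost_Suc)

lemma sum_atMost_if_less: "(\<Sum>i\<le>(d::nat). if i < d then f i else 0) = (\<Sum>i<d. f i :: 'a::comm_monoid_add)"
proof (cases d)
  case (Suc n)
  thus ?thesis by (auto simp: sum.atMost_Suc lessThan_Suc_atMost intro!: sum.cong)
qed simp

lemma prod_list_map_one: "(\<And>x. x \<in> set xs \<Longrightarrow> f x = 1) \<Longrightarrow> prod_list (map f xs) = (1::'a::monoid_mult)"
  by (induction xs) auto

definition indep :: "nat \<Rightarrow> (nat \<Rightarrow> 'a::field vec) \<Rightarrow> bool" where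
  "indep d w = (\<forall>\<alpha>. comb d \<alpha> w = 0\<^sub>v (d+1) \<longrightarrow> (\<forall>i\<le>d. \<alpha> i = 0))"

definition spans :: "nat \<Rightarrow> (nat \<Rightarrow> 'a::field vec) \<Rightarrow> bool" where
  "spans d w = (\<forall>x \<in> carrier_vec (d+1). \<exists>\<alpha>. x = comb d \<alpha> w)"

lemma indep_eq:
  assumes I: "indep d w" and e: "comb d \<alpha> w = comb d \<beta> w" and i: "i \<le> d"
  shows "\<alpha> i = \<beta> i"
proof -
  have "comb d (\<lambda>i. \<alpha> i - \<beta> i) w = 0\<^sub>v (d+1)" unfolding comb_diff e
    by (rule eq_vecI) simp_all
  with I i show ?thesis unfolding indep_def by auto
qed

lemma lincomb_comb:
  assumes w: "\<And>i. i \<le> d \<Longrightarrow> w i \<in> carrier_vec (d+1)" and inj: "inj_on w {..d}"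
  shows "module.lincomb (module_vec TYPE('a::field) (d+1)) a (w ` {..d}) = comb d (a \<circ> w) w"
proof -
  interpret vec_space "TYPE('a)" "d+1" .
  have S: "w ` {..d} \<subseteq> carrier_vec (d+1)" using w by auto
  show ?thesis
  proof (rule eq_vecI)
    show "dim_vec (lincomb a (w ` {..d})) = dim_vec (comb d (a \<circ> w) w)"
      using lincomb_dim[OF _ S] by simp
    fix k assume "k < dim_vec (comb d (a \<circ> w) w)"
    hence k: "k < d+1" by simp
    show "lincomb a (w ` {..d}) $ k = comb d (a \<circ> w) w $ k"
      unfolding lincomb_index[OF k S] using k by (simp add: sum.reindex[OF inj])
  qed
qed

lemma basis_spans:
  assumes w: "\<And>i. i \<le> d \<Longrightarrow> w i \<in> carrier_vec (d+1)" and inj: "inj_on w {..d}"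
    and B: "vectorspace.basis class_ring (module_vec TYPE('a::field) (d+1)) (w ` {..d})"
  shows "spans d w"
  unfolding spans_def
proof
  interpret vec_space "TYPE('a)" "d+1" .
  fix x :: "'a vec" assume x: "x \<in> carrier_vec (d+1)"
  have S: "w ` {..d} \<subseteq> carrier_vec (d+1)" using w by auto
  from B have "span (w ` {..d}) = carrier_vec (d+1)" unfolding basis_def by auto
  with x have "x \<in> span (w ` {..d})" by simp
  from finite_in_span[OF _ S this] obtain a where "lincomb a (w ` {..d}) = x" by auto
  thus "\<exists>\<alpha>. x = comb d \<alpha> w" using lincomb_comb[OF w inj] by metis
qed

lemma basis_indep:
  assumes w: "\<And>i. i \<le> d \<Longrightarrow> w i \<in> carrier_vec (d+1)" and inj: "inj_on w {..d}"
    and B: "vectorspace.basis class_ring (module_vec TYPE('a::field) (d+1)) (w ` {..d})"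
  shows "indep d w"
  unfolding indep_def
proof (rule allI, rule impI)
  interpret vec_space "TYPE('a)" "d+1" .
  fix \<alpha> assume z: "comb d \<alpha> w = 0\<^sub>v (d+1)"
  from B have li: "lin_indpt (w ` {..d})" unfolding basis_def by auto
  let ?a = "\<lambda>x. \<alpha> (the_inv_into {..d} w x)"
  have "comb d (?a \<circ> w) w = comb d \<alpha> w"
    by (rule comb_cong) (simp add: the_inv_into_f_f[OF inj])
  hence lz: "lincomb ?a (w ` {..d}) = 0\<^sub>v (d+1)" using z lincomb_comb[OF w inj] by simp
  show "\<forall>i\<le>d. \<alpha> i = 0"
  proof (rule ccontr)
    assume "\<not> (\<forall>i\<le>d. \<alpha> i = 0)"
    then obtain i where i: "i \<le> d" "\<alpha> i \<noteq> 0" by auto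
    have "?a (w i) \<noteq> 0" using i the_inv_into_f_f[OF inj] by auto
    hence "lin_dep (w ` {..d})" unfolding lin_dep_def
      using i lz by (intro exI[of _ "w ` {..d}"] exI[of _ ?a] exI[of _ "w i"]) auto
    with li show False by simp
  qed
qed

lemma indep_inj:
  assumes I: "indep d w" shows "inj_on w {..d}"
proof (rule inj_onI, rule ccontr)
  fix i j assume i: "i \<in> {..d}" and j: "j \<in> {..d}" and e: "w i = w j" and ne: "i \<noteq> j"
  let ?\<alpha> = "\<lambda>k. if k = i then 1 else if k = j then -1 else (0::'a)"
  have "comb d ?\<alpha> w = 0\<^sub>v (d+1)"
  proof (rule eq_vecI)
    fix k assume "k < dim_vec (0\<^sub>v (d + 1) :: 'a vec)"
    hence k: "k < d+1" by simp
    have "(\<Sum>l\<le>d. ?\<alpha> l * w l $ k) = (\<Sum>l\<in>{i,j}. ?\<alpha> l * w l $ k)"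
      by (rule sum.mono_neutral_right) (use i j in auto)
    also have "\<dots> = 0" using ne e by simp
    finally show "comb d ?\<alpha> w $ k = 0\<^sub>v (d + 1) $ k" using k by simp
  qed simp
  with I i have "?\<alpha> i = 0" unfolding indep_def by blast
  thus False by simp
qed

lemma indep_basis:
  assumes w: "\<And>i. i \<le> d \<Longrightarrow> w i \<in> carrier_vec (d+1)" and I: "indep d w"
  shows "vectorspace.basis class_ring (module_vec TYPE('a::field) (d+1)) (w ` {..d})"
proof -
  interpret vec_space "TYPE('a)" "d+1" .
  have inj: "inj_on w {..d}" by (rule indep_inj[OF I])
  have S: "w ` {..d} \<subseteq> carrier_vec (d+1)" using w by auto
  have li: "lin_indpt (w ` {..d})"
  proof
    assume "lin_dep (w ` {..d})"
    then obtain A' a x where A': "finite A'" "A' \<subseteq> w ` {..d}" and lz: "lincomb a A' = 0\<^sub>v (d+1)"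
      and x: "x \<in> A'" "a x \<noteq> 0"
      unfolding lin_dep_def by auto
    define P where "P = {i\<in>{..d}. w i \<in> A'}"
    have wP: "w ` P = A'" using A' unfolding P_def by auto
    have injP: "inj_on w P" using inj unfolding P_def by (rule inj_on_subset) auto
    define \<alpha> where "\<alpha> i = (if w i \<in> A' then a (w i) else 0)" for i
    have S': "A' \<subseteq> carrier_vec (d+1)" using A' S by auto
    have "comb d \<alpha> w = 0\<^sub>v (d+1)"
    proof (rule eq_vecI)
      fix k assume "k < dim_vec (0\<^sub>v (d + 1) :: 'a vec)"
      hence k: "k < d+1" by simp
      have "(\<Sum>l\<le>d. \<alpha> l * w l $ k) = (\<Sum>l\<in>P. \<alpha> l * w l $ k)"
        by (rule sum.mono_neutral_right) (auto simp: P_def \<alpha>_def)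
      also have "\<dots> = (\<Sum>l\<in>P. a (w l) * w l $ k)"
        by (rule sum.cong) (auto simp: P_def \<alpha>_def)
      also have "\<dots> = (\<Sum>y\<in>A'. a y * y $ k)"
        unfolding wP[symmetric] by (simp add: sum.reindex[OF injP])
      also have "\<dots> = lincomb a A' $ k"
        unfolding lincomb_index[OF k S'] ..
      also have "\<dots> = 0" using lz k by simp
      finally show "comb d \<alpha> w $ k = 0\<^sub>v (d + 1) $ k" using k by simp
    qed simp
    with I have "\<forall>i\<le>d. \<alpha> i = 0" unfolding indep_def by auto
    moreover obtain i where "i \<le> d" "x = w i" using x A' by auto
    ultimately show False using x unfolding \<alpha>_def by auto
  qed
  have card: "card (w ` {..d}) = d+1" using card_image[OF inj] by simp
  show ?thesis
  proof (rule dim_li_is_basis)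
    show "card (w ` {..d}) \<ge> dim" using card dim_is_n by simp
  qed (use S li fin_dim in auto)
qed

lemma indep_spans:
  assumes w: "\<And>i. i \<le> d \<Longrightarrow> w i \<in> carrier_vec (d+1)" and I: "indep d w"
  shows "spans d w"
  by (rule basis_spans[OF w indep_inj[OF I] indep_basis[OF w I]])

lemma trace_in_basis:
  fixes M :: "'a::field mat"
  assumes M: "M \<in> carrier_mat (d+1) (d+1)"
    and w: "\<And>k. k \<le> d \<Longrightarrow> w k \<in> carrier_vec (d+1)" and I: "indep d w"
    and Mw: "\<And>k. k \<le> d \<Longrightarrow> M *\<^sub>v w k = comb d (C k) w"
  shows "trace_mat M = (\<Sum>k\<le>d. C k k)"
proof -
  have "\<forall>l. \<exists>\<beta>. unit_vec (d+1) l = comb d \<beta> w"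
    using indep_spans[OF w I] unfolding spans_def by simp
  then obtain W where W: "\<And>l. unit_vec (d+1) l = comb d (W l) w" by metis
  text \<open>The coordinate matrix \<open>W\<close> of the unit vectors is inverse to the matrix of entries of \<open>w\<close>.\<close>
  have dual: "(\<Sum>l\<le>d. w j $ l * W l k) = (if k = j then 1 else 0)" if j: "j \<le> d" and k: "k \<le> d" for j k
  proof -
    have "comb d (\<lambda>k. if k = j then 1 else 0) w = w j" using comb_single[of j d w 1] j w[OF j] by simp
    also have "\<dots> = comb d (\<lambda>l. w j $ l) (\<lambda>l. comb d (W l) w)"
      by (subst unit_vec_comb[OF w[OF j]], rule comb_cong_family, rule W)
    also have "\<dots> = comb d (\<lambda>k. \<Sum>l\<le>d. w j $ l * W l k) w" by (rule comb_comb)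
    finally have "comb d (\<lambda>k. if k = j then 1 else 0) w = comb d (\<lambda>k. \<Sum>l\<le>d. w j $ l * W l k) w" .
    from indep_eq[OF I this k] show ?thesis by simp
  qed
  have M_unit: "M *\<^sub>v unit_vec (d+1) l = comb d (\<lambda>j. \<Sum>k\<le>d. W l k * C k j) w" for l
  proof -
    have "M *\<^sub>v unit_vec (d+1) l = comb d (W l) (\<lambda>k. M *\<^sub>v w k)"
      unfolding W by (rule mat_comb[OF M w])
    also have "\<dots> = comb d (W l) (\<lambda>k. comb d (C k) w)" by (rule comb_cong_family) (rule Mw)
    also have "\<dots> = comb d (\<lambda>j. \<Sum>k\<le>d. W l k * C k j) w" by (rule comb_comb)
    finally show ?thesis .
  qed
  have "trace_mat M = (\<Sum>l\<le>d. (M *\<^sub>v unit_vec (d+1) l) $ l)"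
    unfolding trace_mat_def using M by (simp add: lessThan_Suc_atMost)
  also have "\<dots> = (\<Sum>l\<le>d. \<Sum>j\<le>d. \<Sum>k\<le>d. W l k * C k j * w j $ l)"
    by (intro sum.cong refl, unfold M_unit) (simp add: sum_distrib_right)
  also have "\<dots> = (\<Sum>j\<le>d. \<Sum>l\<le>d. \<Sum>k\<le>d. W l k * C k j * w j $ l)"
    by (rule sum.swap)
  also have "\<dots> = (\<Sum>j\<le>d. \<Sum>k\<le>d. \<Sum>l\<le>d. W l k * C k j * w j $ l)"
    by (rule sum.cong[OF refl], rule sum.swap)
  also have "\<dots> = (\<Sum>k\<le>d. \<Sum>j\<le>d. C k j * (\<Sum>l\<le>d. w j $ l * W l k))"
    by (subst sum.swap) (simp add: sum_distrib_left mult_ac)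
  also have "\<dots> = (\<Sum>k\<le>d. \<Sum>j\<le>d. if j = k then C k k else 0)"
    by (intro sum.cong refl) (simp add: dual)
  also have "\<dots> = (\<Sum>k\<le>d. C k k)"
    by simp
  finally show ?thesis .
qed

section \<open>The setting: a feasible basis for a tridiagonal action\<close>

text \<open>The hypotheses of the theorem that the argument uses.\<close>
locale feasible_setting =
  fixes d :: nat
    and Es :: "nat \<Rightarrow> 'a::field mat"
    and A :: "'a mat"
    and \<theta> \<theta>s :: "nat \<Rightarrow> 'a"
    and v :: "nat \<Rightarrow> 'a vec"
    and a b c :: "nat \<Rightarrow> 'a"
  assumes Es_carrier: "\<And>i. i \<le> d \<Longrightarrow> Es i \<in> carrier_mat (d+1) (d+1)"
    and Es_orth: "\<And>i j. i \<le> d \<Longrightarrow> j \<le> d \<Longrightarrow>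
                    Es i * Es j = (if i = j then Es i else 0\<^sub>m (d+1) (d+1))"
    and A_carrier: "A \<in> carrier_mat (d+1) (d+1)"
    and A_nonzero: "\<And>i j. i \<le> d \<Longrightarrow> j \<le> d \<Longrightarrow> (i = j + 1 \<or> j = i + 1) \<Longrightarrow>
                   Es i * A * Es j \<noteq> 0\<^sub>m (d+1) (d+1)"
    and \<theta>_distinct: "inj_on \<theta> {0..d}"
    and \<theta>_eig: "\<And>i. i \<le> d \<Longrightarrow> eigenvalue A (\<theta> i)"
    and v_carrier: "\<And>i. i \<le> d \<Longrightarrow> v i \<in> carrier_vec (d+1)"
    and v_feasible: "\<And>i. i \<le> d \<Longrightarrow> \<exists>w \<in> carrier_vec (d+1). v i = Es i *\<^sub>v w"
    and v_inj: "inj_on v {0..d}"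
    and v_basis: "vectorspace.basis class_ring (module_vec TYPE('a) (d+1)) (v ` {0..d})"
    and v_action: "\<And>i. i \<le> d \<Longrightarrow>
          A *\<^sub>v v i = (if i \<ge> 1 then b (i - 1) \<cdot>\<^sub>v v (i - 1) else 0\<^sub>v (d+1))
                     + a i \<cdot>\<^sub>v v i
                     + (if i < d then c (i + 1) \<cdot>\<^sub>v v (i + 1) else 0\<^sub>v (d+1))"
begin

lemma v_spans: "spans d v"
  using basis_spans[OF v_carrier, of id] v_inj v_basis by (simp add: atLeast0AtMost)

lemma v_indep: "indep d v"
  using basis_indep[OF v_carrier, of id] v_inj v_basis by (simp add: atLeast0AtMost)

lemma theta_neq: "i \<le> d \<Longrightarrow> j \<le> d \<Longrightarrow> i \<noteq> j \<Longrightarrow> \<theta> i \<noteq> \<theta> j"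
  using \<theta>_distinct unfolding inj_on_def by auto

lemma Es_v: "i \<le> d \<Longrightarrow> j \<le> d \<Longrightarrow> Es i *\<^sub>v v j = (if i = j then v j else 0\<^sub>v (d+1))"
proof -
  assume i: "i \<le> d" and j: "j \<le> d"
  obtain w where w: "w \<in> carrier_vec (d+1)" "v j = Es j *\<^sub>v w" using v_feasible[OF j] by auto
  have "Es i *\<^sub>v v j = (Es i * Es j) *\<^sub>v w"
    using w Es_carrier[OF i] Es_carrier[OF j] by simp
  also have "\<dots> = (if i = j then v j else 0\<^sub>v (d+1))"
    using Es_orth[OF i j] w by auto
  finally show ?thesis .
qed

lemma Es_comb: "m \<le> d \<Longrightarrow> Es m *\<^sub>v comb d F v = F m \<cdot>\<^sub>v v m"
proof -
  assume m: "m \<le> d"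
  have "Es m *\<^sub>v comb d F v = comb d F (\<lambda>i. Es m *\<^sub>v v i)"
    by (rule mat_comb[OF Es_carrier[OF m] v_carrier])
  also have "\<dots> = comb d F (\<lambda>i. if i = m then v m else 0\<^sub>v (d+1))"
    by (rule comb_cong_family) (use m Es_v in auto)
  also have "\<dots> = F m \<cdot>\<^sub>v v m" by (rule comb_single_family[OF v_carrier[OF m] m])
  finally show ?thesis .
qed

definition tri_entry :: "nat \<Rightarrow> nat \<Rightarrow> 'a" where
  "tri_entry i j = (if j = i + 1 then b i else 0) + (if i = j then a i else 0) + (if i = j + 1 then c i else 0)"

definition tri_apply :: "(nat \<Rightarrow> 'a) \<Rightarrow> nat \<Rightarrow> 'a" where
  "tri_apply F i = (\<Sum>j\<le>d. tri_entry i j * F j)"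

lemma A_v: "j \<le> d \<Longrightarrow> A *\<^sub>v v j = comb d (\<lambda>i. tri_entry i j) v"
proof -
  assume j: "j \<le> d"
  let ?b = "\<lambda>i. if j = i + 1 then b i else 0" and ?c = "\<lambda>i. if i = j + 1 then c i else 0"
  have "A *\<^sub>v v j = comb d ?b v + comb d (\<lambda>i. if i = j then a i else 0) v + comb d ?c v"
  proof -
    have "comb d ?b v = (if j \<ge> 1 then b (j - 1) \<cdot>\<^sub>v v (j - 1) else 0\<^sub>v (d+1))"
    proof (cases j)
      case (Suc k)
      have "comb d ?b v = comb d (\<lambda>i. if i = k then b k else 0) v" by (rule comb_cong) (auto simp: Suc)
      thus ?thesis using comb_single[of k d v "b k"] v_carrier j Suc by simp
    qed (simp add: comb_zero)
    moreover have "comb d ?c v = (if j < d then c (j + 1) \<cdot>\<^sub>v v (j + 1) else 0\<^sub>v (d+1))"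
    proof (cases "j < d")
      case True
      have "comb d ?c v = comb d (\<lambda>i. if i = j + 1 then c (j+1) else 0) v" by (rule comb_cong) auto
      thus ?thesis using comb_single[of "j+1" d v "c (j+1)"] v_carrier True by simp
    next
      case False
      have "comb d ?c v = comb d (\<lambda>i. 0) v" by (rule comb_cong) (use j False in auto)
      thus ?thesis using False comb_zero[of d v] by simp
    qed
    moreover have "comb d (\<lambda>i. if i = j then a i else 0) v = a j \<cdot>\<^sub>v v j"
    proof -
      have "comb d (\<lambda>i. if i = j then a i else 0) v = comb d (\<lambda>i. if i = j then a j else 0) v"
        by (rule comb_cong) auto
      thus ?thesis using comb_single[of j d v "a j"] v_carrier j by simp
    qed
    ultimately show ?thesis using v_action[OF j] by simp
  qed
  also have "\<dots> = comb d (\<lambda>i. tri_entry i j) v" unfolding comb_add tri_entry_def by simp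
  finally show ?thesis .
qed

lemma A_comb: "A *\<^sub>v comb d F v = comb d (tri_apply F) v"
proof -
  have "A *\<^sub>v comb d F v = comb d F (\<lambda>j. A *\<^sub>v v j)" by (rule mat_comb[OF A_carrier v_carrier])
  also have "\<dots> = comb d F (\<lambda>j. comb d (\<lambda>i. tri_entry i j) v)" by (rule comb_cong_family) (simp add: A_v)
  also have "\<dots> = comb d (tri_apply F) v" unfolding comb_comb tri_apply_def by (simp add: mult_ac)
  finally show ?thesis .
qed

lemma tri_apply_simp:
  "i \<le> d \<Longrightarrow> tri_apply F i = (if i < d then b i * F (i+1) else 0) + a i * F i + (if i \<ge> 1 then c i * F (i-1) else 0)"
proof -
  assume i: "i \<le> d"
  have "tri_apply F i = (\<Sum>j\<le>d. (if j = i + 1 then b i * F j else 0)) + (\<Sum>j\<le>d. (if j = i then a i * F j else 0))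
     + (\<Sum>j\<le>d. (if j = i - 1 then (if i \<ge> 1 then c i * F j else 0) else 0))"
    unfolding tri_apply_def sum.distrib[symmetric] by (rule sum.cong) (auto simp: tri_entry_def)
  also have "\<dots> = (if i < d then b i * F (i+1) else 0) + a i * F i + (if i \<ge> 1 then c i * F (i-1) else 0)"
    using i by auto
  finally show ?thesis .
qed

text \<open>\<open>E\<^sup>*\<^sub>pAE\<^sup>*\<^sub>q\<close> is the matrix unit scaled by the \<open>(p,q)\<close> tridiagonal entry; hence the
  off-diagonal entries \<open>b\<^sub>i, c\<^sub>i\<close> are nonzero.\<close>
lemma EAE_comb:
  assumes p: "p \<le> d" and q: "q \<le> d"
  shows "(Es p * A * Es q) *\<^sub>v comb d F v = (tri_entry p q * F q) \<cdot>\<^sub>v v p"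
proof -
  have EA: "Es p * A \<in> carrier_mat (d+1) (d+1)" using Es_carrier[OF p] A_carrier by simp
  have "(Es p * A * Es q) *\<^sub>v comb d F v = (Es p * A) *\<^sub>v (Es q *\<^sub>v comb d F v)"
    by (rule assoc_mult_mat_vec[OF EA Es_carrier[OF q]]) simp
  also have "\<dots> = Es p *\<^sub>v (A *\<^sub>v (Es q *\<^sub>v comb d F v))"
    by (rule assoc_mult_mat_vec) (use Es_carrier[OF p] Es_carrier[OF q] A_carrier in auto)
  also have "Es q *\<^sub>v comb d F v = comb d (\<lambda>k. if k = q then F q else 0) v"
    using Es_comb[OF q] comb_single[of q d v "F q"] q v_carrier[OF q] by simp
  also have "A *\<^sub>v \<dots> = comb d (tri_apply (\<lambda>k. if k = q then F q else 0)) v" by (rule A_comb)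
  also have "Es p *\<^sub>v \<dots> = (tri_entry p q * F q) \<cdot>\<^sub>v v p"
    using Es_comb[OF p] q by (simp add: tri_apply_def if_distrib cong: if_cong)
  finally show ?thesis .
qed

lemma tri_entry_nonzero:
  assumes p: "p \<le> d" and q: "q \<le> d" and pq: "p = q + 1 \<or> q = p + 1"
  shows "tri_entry p q \<noteq> 0"
proof
  assume z: "tri_entry p q = 0"
  have "Es p * A * Es q = 0\<^sub>m (d+1) (d+1)"
  proof (rule mat_zeroI)
    show "Es p * A * Es q \<in> carrier_mat (d+1) (d+1)"
      using Es_carrier[OF p] Es_carrier[OF q] A_carrier by simp
    fix w :: "'a vec" assume "w \<in> carrier_vec (d+1)"
    then obtain F where "w = comb d F v" using v_spans unfolding spans_def by auto
    thus "(Es p * A * Es q) *\<^sub>v w = 0\<^sub>v (d+1)"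
      using EAE_comb[OF p q] z v_carrier[OF p] by (intro eq_vecI) auto
  qed
  with A_nonzero[OF p q pq] show False by simp
qed

lemma b_nonzero: "i < d \<Longrightarrow> b i \<noteq> 0"
  using tri_entry_nonzero[of i "i+1"] by (simp add: tri_entry_def)

lemma c_nonzero: "1 \<le> i \<Longrightarrow> i \<le> d \<Longrightarrow> c i \<noteq> 0"
  using tri_entry_nonzero[of i "i-1"] by (cases i) (auto simp: tri_entry_def)

subsection \<open>The eigenvectors \<open>y\<^sub>j = \<Sum>\<^sub>i u\<^sub>i(\<theta>\<^sub>j) v\<^sub>i\<close>\<close>

definition ucoord :: "nat \<Rightarrow> nat \<Rightarrow> 'a" where
  "ucoord j i = poly (upoly d a b c i) (\<theta> j)"

definition eigvec :: "nat \<Rightarrow> 'a vec" where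
  "eigvec j = comb d (ucoord j) v"

lemma ucoord_0 [simp]: "ucoord j 0 = 1"
  by (simp add: ucoord_def)

lemma eigvec_carrier [simp]: "eigvec j \<in> carrier_vec (d+1)"
  and eigvec_carrier_Suc [simp]: "eigvec j \<in> carrier_vec (Suc d)"
  and eigvec_dim [simp]: "dim_vec (eigvec j) = Suc d"
  by (simp_all add: eigvec_def)

lemma upoly_rec:
  "i < d \<Longrightarrow> poly (upoly d a b c (i+1)) x * b i
     = (x - a i) * poly (upoly d a b c i) x - (if i \<ge> 1 then c i * poly (upoly d a b c (i-1)) x else 0)"
  using b_nonzero[of i] by (cases i) (simp_all add: u_den_def field_simps)

text \<open>A coefficient vector that is an eigenvector of the tridiagonal matrix is a multiple
  of \<open>(u\<^sub>i(t))\<^sub>i\<close>: the recurrence determines it from its \<open>0\<close>-th entry.\<close>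
lemma eigen_coords_are_upoly:
  assumes E: "\<And>i. i \<le> d \<Longrightarrow> tri_apply F i = t * F i"
  shows "i \<le> d \<Longrightarrow> F i = F 0 * poly (upoly d a b c i) t"
proof (induction i rule: less_induct)
  case (less i)
  show ?case
  proof (cases i)
    case (Suc k)
    let ?u = "\<lambda>i. poly (upoly d a b c i) t"
    have k: "k < d" using less.prems Suc by simp
    have "F (k+1) * b k = (t - a k) * F k - (if k \<ge> 1 then c k * F (k-1) else 0)"
      using E[of k] tri_apply_simp[of k F] k by (simp add: algebra_simps)
    also have "\<dots> = F 0 * (?u (k+1) * b k)"
      unfolding upoly_rec[OF k] using less.IH[of k] less.IH[of "k-1"] Suc k
      by (auto simp: algebra_simps)
    finally show ?thesis using b_nonzero[OF k] Suc by simp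
  qed simp
qed

text \<open>Consequently \<open>(u\<^sub>i(\<theta>\<^sub>j))\<^sub>i\<close> is an eigenvector of the tridiagonal matrix: take the
  coordinates of any \<open>\<theta>\<^sub>j\<close>-eigenvector of \<open>A\<close>; its \<open>0\<close>-th coordinate is nonzero.\<close>
lemma tri_apply_ucoord: "j \<le> d \<Longrightarrow> i \<le> d \<Longrightarrow> tri_apply (ucoord j) i = \<theta> j * ucoord j i"
proof -
  assume j: "j \<le> d" and i: "i \<le> d"
  obtain z where z: "eigenvector A z (\<theta> j)" using \<theta>_eig[OF j] unfolding eigenvalue_def by auto
  hence zc: "z \<in> carrier_vec (d+1)" and zn: "z \<noteq> 0\<^sub>v (d+1)" and Az: "A *\<^sub>v z = \<theta> j \<cdot>\<^sub>v z"
    using A_carrier unfolding eigenvector_def by auto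
  obtain F where F: "z = comb d F v" using v_spans zc unfolding spans_def by auto
  have "comb d (tri_apply F) v = comb d (\<lambda>i. \<theta> j * F i) v"
    using Az unfolding F A_comb comb_scale by simp
  hence E: "\<And>i. i \<le> d \<Longrightarrow> tri_apply F i = \<theta> j * F i" using indep_eq[OF v_indep] by blast
  have FU: "\<And>i. i \<le> d \<Longrightarrow> F i = F 0 * ucoord j i"
    using eigen_coords_are_upoly[OF E] unfolding ucoord_def by blast
  have F0: "F 0 \<noteq> 0"
  proof
    assume "F 0 = 0"
    hence "comb d F v = comb d (\<lambda>i. 0) v" by (intro comb_cong) (subst FU, simp_all)
    with zn F comb_zero[of d v] show False by metis
  qed
  have "tri_apply F i = F 0 * tri_apply (ucoord j) i"
    unfolding tri_apply_def sum_distrib_left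
  proof (rule sum.cong)
    fix k assume "k \<in> {..d}"
    thus "tri_entry i k * F k = F 0 * (tri_entry i k * ucoord j k)" by (subst FU) (simp_all add: mult_ac)
  qed simp
  with E[OF i] FU[OF i] F0 show ?thesis by (metis mult.left_commute mult_left_cancel)
qed

lemma A_eigvec: "j \<le> d \<Longrightarrow> A *\<^sub>v eigvec j = \<theta> j \<cdot>\<^sub>v eigvec j"
  unfolding eigvec_def A_comb comb_scale[symmetric] by (rule comb_cong) (simp add: tri_apply_ucoord)

lemma eigvec_nonzero: "eigvec j \<noteq> 0\<^sub>v (d+1)"
proof
  assume "eigvec j = 0\<^sub>v (d+1)"
  hence "comb d (ucoord j) v = comb d (\<lambda>i. 0) v" unfolding eigvec_def comb_zero .
  from indep_eq[OF v_indep this, of 0] show False by simp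
qed

lemma eigvec_comb: "comb d \<beta> eigvec = comb d (\<lambda>i. \<Sum>k\<le>d. \<beta> k * ucoord k i) v"
  unfolding eigvec_def by (rule comb_comb)

abbreviation E :: "nat \<Rightarrow> 'a mat" where "E m \<equiv> prim_idem A \<theta> d m"

lemma factor_eigvec:
  assumes k: "k \<le> d"
  shows "((1 / (\<theta> m - \<theta> j)) \<cdot>\<^sub>m (A - \<theta> j \<cdot>\<^sub>m 1\<^sub>m (d+1))) *\<^sub>v eigvec k
       = ((\<theta> k - \<theta> j) / (\<theta> m - \<theta> j)) \<cdot>\<^sub>v eigvec k"
proof -
  have "((1 / (\<theta> m - \<theta> j)) \<cdot>\<^sub>m (A - \<theta> j \<cdot>\<^sub>m 1\<^sub>m (d+1))) *\<^sub>v eigvec k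
      = (1 / (\<theta> m - \<theta> j)) \<cdot>\<^sub>v ((A - \<theta> j \<cdot>\<^sub>m 1\<^sub>m (d+1)) *\<^sub>v eigvec k)"
    by (rule smult_mat_vec) (use A_carrier in auto)
  also have "(A - \<theta> j \<cdot>\<^sub>m 1\<^sub>m (d+1)) *\<^sub>v eigvec k = A *\<^sub>v eigvec k - (\<theta> j \<cdot>\<^sub>m 1\<^sub>m (d+1)) *\<^sub>v eigvec k"
    by (rule minus_mult_distrib_mat_vec) (use A_carrier in auto)
  also have "(\<theta> j \<cdot>\<^sub>m 1\<^sub>m (d+1)) *\<^sub>v eigvec k = \<theta> j \<cdot>\<^sub>v eigvec k"
    by (subst smult_mat_vec[of _ "d+1" "d+1"]) auto
  also have "A *\<^sub>v eigvec k = \<theta> k \<cdot>\<^sub>v eigvec k" by (rule A_eigvec[OF k])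
  finally show ?thesis
    by (intro eq_vecI) (auto simp: divide_inverse algebra_simps)
qed

lemma factors_eigvec:
  assumes k: "k \<le> d"
  shows "foldr (\<lambda>j M. ((1 / (\<theta> m - \<theta> j)) \<cdot>\<^sub>m (A - \<theta> j \<cdot>\<^sub>m 1\<^sub>m (d+1))) * M) L (1\<^sub>m (d+1)) \<in> carrier_mat (d+1) (d+1)
   \<and> foldr (\<lambda>j M. ((1 / (\<theta> m - \<theta> j)) \<cdot>\<^sub>m (A - \<theta> j \<cdot>\<^sub>m 1\<^sub>m (d+1))) * M) L (1\<^sub>m (d+1)) *\<^sub>v eigvec k
     = prod_list (map (\<lambda>j. (\<theta> k - \<theta> j) / (\<theta> m - \<theta> j)) L) \<cdot>\<^sub>v eigvec k"
proof (induction L)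
  case (Cons j L)
  let ?F = "(1 / (\<theta> m - \<theta> j)) \<cdot>\<^sub>m (A - \<theta> j \<cdot>\<^sub>m 1\<^sub>m (d+1))"
  let ?M = "foldr (\<lambda>j M. ((1 / (\<theta> m - \<theta> j)) \<cdot>\<^sub>m (A - \<theta> j \<cdot>\<^sub>m 1\<^sub>m (d+1))) * M) L (1\<^sub>m (d+1))"
  let ?p = "prod_list (map (\<lambda>j. (\<theta> k - \<theta> j) / (\<theta> m - \<theta> j)) L)"
  have F: "?F \<in> carrier_mat (d+1) (d+1)" using A_carrier by auto
  have M: "?M \<in> carrier_mat (d+1) (d+1)" and My: "?M *\<^sub>v eigvec k = ?p \<cdot>\<^sub>v eigvec k" using Cons by auto
  have "(?F * ?M) *\<^sub>v eigvec k = ?F *\<^sub>v (?M *\<^sub>v eigvec k)"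
    by (rule assoc_mult_mat_vec[OF F M]) simp
  also have "\<dots> = ?p \<cdot>\<^sub>v (?F *\<^sub>v eigvec k)" unfolding My by (rule mult_mat_vec[OF F]) simp
  also have "\<dots> = prod_list (map (\<lambda>j. (\<theta> k - \<theta> j) / (\<theta> m - \<theta> j)) (j # L)) \<cdot>\<^sub>v eigvec k"
    unfolding factor_eigvec[OF k] by (simp add: smult_smult_assoc mult_ac)
  finally show ?case using F M by simp
qed simp

lemma E_carrier: "E m \<in> carrier_mat (d+1) (d+1)"
  unfolding prim_idem_def by (rule conjunct1[OF factors_eigvec[OF le0]])

text \<open>\<open>E\<^sub>m y\<^sub>k = \<delta>\<^sub>m\<^sub>k y\<^sub>k\<close>: the factor \<open>j = k\<close> kills \<open>y\<^sub>k\<close> unless \<open>k = m\<close>, where all factors are \<open>1\<close>.\<close>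
lemma E_eigvec:
  assumes m: "m \<le> d" and k: "k \<le> d"
  shows "E m *\<^sub>v eigvec k = (if k = m then eigvec k else 0\<^sub>v (d+1))"
proof -
  let ?L = "filter (\<lambda>j. j \<noteq> m) [0..<d+1]"
  let ?f = "\<lambda>j. (\<theta> k - \<theta> j) / (\<theta> m - \<theta> j)"
  have e: "E m *\<^sub>v eigvec k = prod_list (map ?f ?L) \<cdot>\<^sub>v eigvec k"
    unfolding prim_idem_def using factors_eigvec[OF k] by blast
  show ?thesis
  proof (cases "k = m")
    case True
    have "prod_list (map ?f ?L) = 1"
      by (rule prod_list_map_one) (use True m theta_neq in \<open>auto simp del: upt_Suc\<close>)
    thus ?thesis using e True by simp
  next
    case False
    have "k \<in> set ?L" using k False by (auto simp del: upt_Suc)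
    hence "prod_list (map ?f ?L) = 0" by (force simp: prod_list_zero_iff)
    thus ?thesis using e False by (intro eq_vecI) auto
  qed
qed

lemma E_comb_eigvec: "m \<le> d \<Longrightarrow> E m *\<^sub>v comb d \<beta> eigvec = \<beta> m \<cdot>\<^sub>v eigvec m"
proof -
  assume m: "m \<le> d"
  have "E m *\<^sub>v comb d \<beta> eigvec = comb d \<beta> (\<lambda>k. E m *\<^sub>v eigvec k)"
    by (rule mat_comb[OF E_carrier]) simp
  also have "\<dots> = comb d \<beta> (\<lambda>k. if k = m then eigvec m else 0\<^sub>v (d+1))"
    by (rule comb_cong_family) (use m E_eigvec in auto)
  also have "\<dots> = \<beta> m \<cdot>\<^sub>v eigvec m" by (rule comb_single_family[OF eigvec_carrier m])
  finally show ?thesis .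
qed

lemma eigvec_indep: "indep d eigvec"
  unfolding indep_def
proof (intro allI impI)
  fix \<beta> m assume z: "comb d \<beta> eigvec = 0\<^sub>v (d+1)" and m: "m \<le> d"
  have "E m *\<^sub>v 0\<^sub>v (d+1) = 0\<^sub>v (d+1)" using E_carrier[of m] by (intro eq_vecI) auto
  hence "\<beta> m \<cdot>\<^sub>v eigvec m = 0\<^sub>v (d+1)" using E_comb_eigvec[OF m, of \<beta>] z by simp
  thus "\<beta> m = 0" using smult_nonzero_vec_eq_zero[OF eigvec_carrier eigvec_nonzero] by blast
qed

lemma eigvec_spans: "spans d eigvec"
  by (rule indep_spans[OF _ eigvec_indep]) simp

abbreviation D :: "'a mat" where "D \<equiv> dual_mat d \<theta>s Es"

lemma dual_foldr:
  assumes L: "set L \<subseteq> {..d}"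
  shows "foldr (\<lambda>i M. \<theta>s i \<cdot>\<^sub>m Es i + M) L (0\<^sub>m (d+1) (d+1)) \<in> carrier_mat (d+1) (d+1)
    \<and> foldr (\<lambda>i M. \<theta>s i \<cdot>\<^sub>m Es i + M) L (0\<^sub>m (d+1) (d+1)) *\<^sub>v comb d F v
      = comb d (\<lambda>i. (\<Sum>l\<leftarrow>L. if l = i then \<theta>s l else 0) * F i) v"
  using L
proof (induction L)
  case Nil
  show ?case by (simp, intro eq_vecI) auto
next
  case (Cons l L)
  let ?M = "foldr (\<lambda>i M. \<theta>s i \<cdot>\<^sub>m Es i + M) L (0\<^sub>m (d+1) (d+1))"
  have l: "l \<le> d" using Cons by auto
  have M: "?M \<in> carrier_mat (d+1) (d+1)"
    and Mv: "?M *\<^sub>v comb d F v = comb d (\<lambda>i. (\<Sum>l\<leftarrow>L. if l = i then \<theta>s l else 0) * F i) v"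
    using Cons by auto
  have Ec: "\<theta>s l \<cdot>\<^sub>m Es l \<in> carrier_mat (d+1) (d+1)" using Es_carrier[OF l] by simp
  have "(\<theta>s l \<cdot>\<^sub>m Es l + ?M) *\<^sub>v comb d F v = (\<theta>s l \<cdot>\<^sub>m Es l) *\<^sub>v comb d F v + ?M *\<^sub>v comb d F v"
    by (rule add_mult_distrib_mat_vec[OF Ec M]) simp
  also have "(\<theta>s l \<cdot>\<^sub>m Es l) *\<^sub>v comb d F v = \<theta>s l \<cdot>\<^sub>v (Es l *\<^sub>v comb d F v)"
    by (rule smult_mat_vec[OF Es_carrier[OF l]]) simp
  also have "\<dots> = comb d (\<lambda>i. if i = l then \<theta>s l * F l else 0) v"
    unfolding Es_comb[OF l] using comb_single[of l d v "\<theta>s l * F l"] l v_carrier[OF l]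
    by (simp add: smult_smult_assoc)
  finally have "(\<theta>s l \<cdot>\<^sub>m Es l + ?M) *\<^sub>v comb d F v
      = comb d (\<lambda>i. (if i = l then \<theta>s l * F l else 0) + (\<Sum>l\<leftarrow>L. if l = i then \<theta>s l else 0) * F i) v"
    unfolding Mv comb_add .
  also have "\<dots> = comb d (\<lambda>i. (\<Sum>l\<leftarrow>l # L. if l = i then \<theta>s l else 0) * F i) v"
    by (rule comb_cong) (auto simp: algebra_simps)
  finally show ?case using Ec M by simp
qed

lemma D_carrier: "D \<in> carrier_mat (d+1) (d+1)"
  unfolding dual_mat_def by (rule conjunct1[OF dual_foldr[of "[0..<d+1]"]]) (auto simp del: upt_Suc)

lemma D_comb: "D *\<^sub>v comb d F v = comb d (\<lambda>i. \<theta>s i * F i) v"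
proof -
  have "D *\<^sub>v comb d F v = comb d (\<lambda>i. (\<Sum>l\<leftarrow>[0..<d+1]. if l = i then \<theta>s l else 0) * F i) v"
    unfolding dual_mat_def by (rule conjunct2[OF dual_foldr]) auto
  also have "\<dots> = comb d (\<lambda>i. \<theta>s i * F i) v"
  proof (rule comb_cong)
    fix i assume i: "i \<le> d"
    have "(\<Sum>l\<leftarrow>[0..<d+1]. if l = i then \<theta>s l else 0) = (\<Sum>l\<in>{0..<d+1}. if l = i then \<theta>s l else 0)"
      by (simp add: sum_set_upt_conv_sum_list_nat[symmetric] del: upt_Suc)
    also have "\<dots> = \<theta>s i" using i by simp
    finally show "(\<Sum>l\<leftarrow>[0..<d+1]. if l = i then \<theta>s l else 0) * F i = \<theta>s i * F i" by simp
  qed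
  finally show ?thesis .
qed

subsection \<open>A weight form making the tridiagonal matrix symmetric\<close>

text \<open>With weights \<open>\<kappa>\<^sub>0 = 1\<close>, \<open>\<kappa>\<^sub>i\<^sub>+\<^sub>1 c\<^sub>i\<^sub>+\<^sub>1 = \<kappa>\<^sub>i b\<^sub>i\<close>, the tridiagonal matrix is self-adjoint for
  the bilinear form \<open>\<langle>F, G\<rangle> = \<Sum>\<^sub>i \<kappa>\<^sub>i F\<^sub>i G\<^sub>i\<close>.\<close>
fun weight :: "nat \<Rightarrow> 'a" where
  "weight 0 = 1"
| "weight (Suc i) = weight i * b i / c (Suc i)"

definition wform :: "(nat \<Rightarrow> 'a) \<Rightarrow> (nat \<Rightarrow> 'a) \<Rightarrow> 'a" where
  "wform F G = (\<Sum>i\<le>d. weight i * F i * G i)"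

lemma wform_comm: "wform F G = wform G F"
  unfolding wform_def by (simp add: mult_ac)

lemma wform_cong: "(\<And>i. i \<le> d \<Longrightarrow> F i = F' i) \<Longrightarrow> (\<And>i. i \<le> d \<Longrightarrow> G i = G' i) \<Longrightarrow> wform F G = wform F' G'"
  unfolding wform_def by (rule sum.cong) auto

lemma wform_sum_right: "wform F (\<lambda>i. \<Sum>k\<le>d. \<beta> k * G k i) = (\<Sum>k\<le>d. \<beta> k * wform F (G k))"
  unfolding wform_def sum_distrib_left by (subst sum.swap) (simp add: mult_ac)

lemma wform_scale: "wform (\<lambda>i. t * F i) G = t * wform F G"
  unfolding wform_def sum_distrib_left by (simp add: mult_ac)

text \<open>\<open>\<langle>TF, G\<rangle>\<close> written in a form symmetric in \<open>F\<close> and \<open>G\<close>.\<close>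
lemma wform_tri_apply:
  "wform (tri_apply F) G = (\<Sum>i\<le>d. weight i * a i * F i * G i)
     + (\<Sum>i<d. weight i * b i * (F (i+1) * G i + F i * G (i+1)))"
proof -
  have "wform (tri_apply F) G = (\<Sum>i\<le>d. if i < d then weight i * b i * F (i+1) * G i else 0)
     + (\<Sum>i\<le>d. weight i * a i * F i * G i) + (\<Sum>i\<le>d. if i \<ge> 1 then weight i * c i * F (i-1) * G i else 0)"
    unfolding wform_def sum.distrib[symmetric] by (rule sum.cong) (auto simp: tri_apply_simp algebra_simps)
  also have "(\<Sum>i\<le>d. if i < d then weight i * b i * F (i+1) * G i else 0) = (\<Sum>i<d. weight i * b i * F (i+1) * G i)"
    by (rule sum_atMost_if_less)
  also have "(\<Sum>i\<le>d. if i \<ge> 1 then weight i * c i * F (i-1) * G i else 0) = (\<Sum>i<d. weight i * b i * F i * G (i+1))"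
    unfolding sum_atMost_if_ge1 by (rule sum.cong) (use c_nonzero in auto)
  finally show ?thesis by (simp add: sum.distrib algebra_simps)
qed

lemma tri_apply_self_adjoint: "wform (tri_apply F) G = wform F (tri_apply G)"
  unfolding wform_comm[of F] wform_tri_apply by (simp add: algebra_simps)

lemma ucoord_orth:
  assumes j: "j \<le> d" and k: "k \<le> d" and jk: "j \<noteq> k"
  shows "wform (ucoord j) (ucoord k) = 0"
proof -
  have "\<theta> j * wform (ucoord j) (ucoord k) = wform (tri_apply (ucoord j)) (ucoord k)"
    unfolding wform_scale[symmetric] by (rule wform_cong) (auto simp: tri_apply_ucoord j)
  also have "\<dots> = wform (ucoord j) (tri_apply (ucoord k))" by (rule tri_apply_self_adjoint)
  also have "\<dots> = \<theta> k * wform (ucoord j) (ucoord k)"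
    unfolding wform_comm[of "ucoord j"] wform_scale[symmetric] by (rule wform_cong) (auto simp: tri_apply_ucoord k)
  finally have "(\<theta> j - \<theta> k) * wform (ucoord j) (ucoord k) = 0" by (simp add: algebra_simps)
  thus ?thesis using theta_neq[OF j k jk] by simp
qed

lemma wform_ucoord_sum:
  assumes m: "m \<le> d"
  shows "wform (ucoord m) (\<lambda>i. \<Sum>k\<le>d. \<beta> k * ucoord k i) = \<beta> m * wform (ucoord m) (ucoord m)"
proof -
  have "wform (ucoord m) (\<lambda>i. \<Sum>k\<le>d. \<beta> k * ucoord k i) = (\<Sum>k\<le>d. \<beta> k * wform (ucoord m) (ucoord k))"
    by (rule wform_sum_right)
  also have "\<dots> = (\<Sum>k\<le>d. if k = m then \<beta> m * wform (ucoord m) (ucoord m) else 0)"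
    by (rule sum.cong) (auto simp: ucoord_orth m)
  finally show ?thesis using m by simp
qed

text \<open>The form is nondegenerate on each \<open>u(\<theta>\<^sub>m)\<close>: expanding \<open>v\<^sub>0\<close> in the basis \<open>y\<close> and pairing
  with \<open>u(\<theta>\<^sub>m)\<close> gives \<open>u\<^sub>0(\<theta>\<^sub>m) = 1\<close> on one side and a multiple of \<open>\<langle>u(\<theta>\<^sub>m), u(\<theta>\<^sub>m)\<rangle>\<close> on the other.\<close>
lemma ucoord_nondeg:
  assumes m: "m \<le> d"
  shows "wform (ucoord m) (ucoord m) \<noteq> 0"
proof
  assume z: "wform (ucoord m) (ucoord m) = 0"
  obtain \<beta> where \<beta>: "v 0 = comb d \<beta> eigvec" using eigvec_spans v_carrier[of 0] unfolding spans_def by auto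
  have "comb d (\<lambda>k. if k = 0 then 1 else 0) v = comb d (\<lambda>i. \<Sum>k\<le>d. \<beta> k * ucoord k i) v"
    using comb_single[of 0 d v 1] v_carrier[of 0] \<beta> eigvec_comb by simp
  hence co: "\<And>i. i \<le> d \<Longrightarrow> (if i = 0 then 1 else 0) = (\<Sum>k\<le>d. \<beta> k * ucoord k i)"
    using indep_eq[OF v_indep] by blast
  have "1 = wform (ucoord m) (\<lambda>i. if i = 0 then 1 else 0)"
    unfolding wform_def by (simp add: if_distrib cong: if_cong)
  also have "\<dots> = wform (ucoord m) (\<lambda>i. \<Sum>k\<le>d. \<beta> k * ucoord k i)"
    by (rule wform_cong) (auto simp: co)
  also have "\<dots> = 0" unfolding wform_ucoord_sum[OF m] z by simp
  finally show False by simp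
qed

subsection \<open>The matrix \<open>\<gamma>\<close> of \<open>A\<^sup>*\<close> in the eigenbasis\<close>

definition dual_coeff :: "nat \<Rightarrow> nat \<Rightarrow> 'a" where
  "dual_coeff j = (SOME G. D *\<^sub>v eigvec j = comb d G eigvec)"

lemma D_eigvec: "D *\<^sub>v eigvec j = comb d (dual_coeff j) eigvec"
proof -
  have "D *\<^sub>v eigvec j \<in> carrier_vec (d+1)" using D_carrier by simp
  hence "\<exists>G. D *\<^sub>v eigvec j = comb d G eigvec" using eigvec_spans unfolding spans_def by auto
  thus ?thesis unfolding dual_coeff_def by (rule someI_ex)
qed

lemma dual_coeff_coords:
  assumes j: "j \<le> d" and i: "i \<le> d"
  shows "\<theta>s i * ucoord j i = (\<Sum>k\<le>d. dual_coeff j k * ucoord k i)"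
proof -
  have "comb d (\<lambda>i. \<theta>s i * ucoord j i) v = comb d (\<lambda>i. \<Sum>k\<le>d. dual_coeff j k * ucoord k i) v"
    using D_eigvec[of j] unfolding eigvec_comb unfolding eigvec_def D_comb .
  thus ?thesis using indep_eq[OF v_indep _ i] by blast
qed

text \<open>The zero pattern of \<open>\<gamma>\<close> is symmetric: \<open>\<gamma>\<^sub>j\<^sub>m \<langle>u(\<theta>\<^sub>m),u(\<theta>\<^sub>m)\<rangle> = \<langle>u(\<theta>\<^sub>m), \<theta>\<^sup>* u(\<theta>\<^sub>j)\<rangle>\<close>
  is symmetric in \<open>j, m\<close> up to the nonzero factors.\<close>
lemma dual_coeff_zero_sym:
  assumes j: "j \<le> d" and m: "m \<le> d"
  shows "dual_coeff j m = 0 \<longleftrightarrow> dual_coeff m j = 0"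
proof -
  have jm: "wform (ucoord m) (\<lambda>i. \<theta>s i * ucoord j i) = dual_coeff j m * wform (ucoord m) (ucoord m)"
    unfolding wform_ucoord_sum[OF m, symmetric] by (rule wform_cong) (auto simp: dual_coeff_coords j)
  have mj: "wform (ucoord j) (\<lambda>i. \<theta>s i * ucoord m i) = dual_coeff m j * wform (ucoord j) (ucoord j)"
    unfolding wform_ucoord_sum[OF j, symmetric] by (rule wform_cong) (auto simp: dual_coeff_coords m)
  have "wform (ucoord m) (\<lambda>i. \<theta>s i * ucoord j i) = wform (ucoord j) (\<lambda>i. \<theta>s i * ucoord m i)"
    unfolding wform_def by (simp add: mult_ac)
  thus ?thesis using jm mj ucoord_nondeg[OF j] ucoord_nondeg[OF m] by auto
qed

lemma D_comb_eigvec: "D *\<^sub>v comb d \<beta> eigvec = comb d (\<lambda>i. \<Sum>k\<le>d. \<beta> k * dual_coeff k i) eigvec"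
proof -
  have "D *\<^sub>v comb d \<beta> eigvec = comb d \<beta> (\<lambda>k. D *\<^sub>v eigvec k)" by (rule mat_comb[OF D_carrier]) simp
  also have "\<dots> = comb d (\<lambda>i. \<Sum>k\<le>d. \<beta> k * dual_coeff k i) eigvec"
    unfolding D_eigvec by (rule comb_comb)
  finally show ?thesis .
qed

lemma EDE_comb:
  assumes r: "r \<le> d" and j: "j \<le> d"
  shows "(E r * D * E j) *\<^sub>v comb d \<beta> eigvec = (\<beta> j * dual_coeff j r) \<cdot>\<^sub>v eigvec r"
proof -
  have ED: "E r * D \<in> carrier_mat (d+1) (d+1)" by (rule mult_carrier_mat[OF E_carrier D_carrier])
  have "(E r * D * E j) *\<^sub>v comb d \<beta> eigvec = (E r * D) *\<^sub>v (E j *\<^sub>v comb d \<beta> eigvec)"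
    by (rule assoc_mult_mat_vec[OF ED E_carrier]) simp
  also have "\<dots> = E r *\<^sub>v (D *\<^sub>v (E j *\<^sub>v comb d \<beta> eigvec))"
    by (rule assoc_mult_mat_vec[OF E_carrier D_carrier]) (rule mult_mat_vec_carrier[OF E_carrier], simp)
  also have "E j *\<^sub>v comb d \<beta> eigvec = comb d (\<lambda>k. if k = j then \<beta> j else 0) eigvec"
    unfolding E_comb_eigvec[OF j] by (rule comb_single[symmetric, OF j eigvec_carrier])
  also have "E r *\<^sub>v (D *\<^sub>v \<dots>) = (\<Sum>k\<le>d. (if k = j then \<beta> j else 0) * dual_coeff k r) \<cdot>\<^sub>v eigvec r"
    unfolding D_comb_eigvec E_comb_eigvec[OF r] ..
  also have "(\<Sum>k\<le>d. (if k = j then \<beta> j else 0) * dual_coeff k r)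
      = (\<Sum>k\<le>d. if k = j then \<beta> j * dual_coeff j r else 0)"
    by (rule sum.cong) auto
  also have "\<dots> = \<beta> j * dual_coeff j r" using j by simp
  finally show ?thesis .
qed

lemma EDE_zero_iff:
  assumes r: "r \<le> d" and j: "j \<le> d"
  shows "E r * D * E j = 0\<^sub>m (d+1) (d+1) \<longleftrightarrow> dual_coeff j r = 0"
proof
  assume z: "E r * D * E j = 0\<^sub>m (d+1) (d+1)"
  have "(1 * dual_coeff j r) \<cdot>\<^sub>v eigvec r = (E r * D * E j) *\<^sub>v comb d (\<lambda>k. if k = j then 1 else 0) eigvec"
    using EDE_comb[OF r j] by simp
  also have "\<dots> = 0\<^sub>v (d+1)" unfolding z by (intro eq_vecI) auto
  finally show "dual_coeff j r = 0" using smult_nonzero_vec_eq_zero[OF eigvec_carrier eigvec_nonzero] by simp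
next
  assume g: "dual_coeff j r = 0"
  show "E r * D * E j = 0\<^sub>m (d+1) (d+1)"
  proof (rule mat_zeroI)
    show "E r * D * E j \<in> carrier_mat (d+1) (d+1)"
      by (rule mult_carrier_mat[OF mult_carrier_mat[OF E_carrier D_carrier] E_carrier])
    fix w :: "'a vec" assume "w \<in> carrier_vec (d+1)"
    then obtain \<beta> where w: "w = comb d \<beta> eigvec" using eigvec_spans unfolding spans_def by auto
    have "(E r * D * E j) *\<^sub>v comb d \<beta> eigvec = 0\<^sub>v (d+1)" unfolding EDE_comb[OF r j] g
      by (intro eq_vecI) auto
    thus "(E r * D * E j) *\<^sub>v w = 0\<^sub>v (d+1)" using w by simp
  qed
qed

text \<open>Fact (b) of the plan: \<open>a\<^sup>*\<^sub>r = tr(E\<^sub>rA\<^sup>*) = \<gamma>\<^sub>r\<^sub>r\<close>, computing the trace in the basis \<open>y\<close>.\<close>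
lemma trace_ED:
  assumes r: "r \<le> d"
  shows "trace_mat (E r * D) = dual_coeff r r"
proof -
  have "(E r * D) *\<^sub>v eigvec k = comb d (\<lambda>j. if j = r then dual_coeff k r else 0) eigvec" for k
  proof -
    have "(E r * D) *\<^sub>v eigvec k = E r *\<^sub>v (D *\<^sub>v eigvec k)"
      by (rule assoc_mult_mat_vec[OF E_carrier D_carrier]) simp
    also have "\<dots> = dual_coeff k r \<cdot>\<^sub>v eigvec r" unfolding D_eigvec E_comb_eigvec[OF r] ..
    finally show ?thesis using comb_single[OF r eigvec_carrier] by simp
  qed
  hence "trace_mat (E r * D) = (\<Sum>k\<le>d. if k = r then dual_coeff k r else 0)"
    by (intro trace_in_basis[OF mult_carrier_mat[OF E_carrier D_carrier] _ eigvec_indep]) simp_all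
  thus ?thesis using r by simp
qed

subsection \<open>Unique neighbours and the \<open>u\<close>-relation\<close>

text \<open>If \<open>s\<close> is the only \<open>\<gamma>\<close>-neighbour of \<open>r\<close>, then \<open>\<theta>\<^sup>*\<^sub>i u\<^sub>i(\<theta>\<^sub>r) = \<gamma>\<^sub>r\<^sub>r u\<^sub>i(\<theta>\<^sub>r) + \<gamma>\<^sub>r\<^sub>s u\<^sub>i(\<theta>\<^sub>s)\<close>,
  and \<open>i = 0\<close> gives \<open>\<gamma>\<^sub>r\<^sub>s = \<theta>\<^sup>*\<^sub>0 - \<gamma>\<^sub>r\<^sub>r\<close>.\<close>
lemma unique_neighbour_imp_relation:
  assumes r: "r \<le> d" and s: "s \<le> d" and rs: "r \<noteq> s"
    and H: "\<forall>j\<le>d. (j \<noteq> r \<and> dual_coeff r j \<noteq> 0) \<longleftrightarrow> j = s"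
  shows "dual_coeff r r \<noteq> \<theta>s 0 \<and>
    (\<forall>i\<le>d. ucoord s i = ucoord r i * ((\<theta>s i - dual_coeff r r) / (\<theta>s 0 - dual_coeff r r)))"
proof -
  have gs: "dual_coeff r s \<noteq> 0" using H s by auto
  have two_terms: "(\<theta>s i - dual_coeff r r) * ucoord r i = dual_coeff r s * ucoord s i" if i: "i \<le> d" for i
  proof -
    have "(\<Sum>k\<le>d. dual_coeff r k * ucoord k i)
        = (\<Sum>k\<le>d. (if k = r then dual_coeff r r * ucoord r i else 0) + (if k = s then dual_coeff r s * ucoord s i else 0))"
      by (rule sum.cong) (use H rs in auto)
    also have "\<dots> = dual_coeff r r * ucoord r i + dual_coeff r s * ucoord s i" using r s by (simp add: sum.distrib)
    finally show ?thesis using dual_coeff_coords[OF r i] by (simp add: algebra_simps)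
  qed
  have g0: "\<theta>s 0 - dual_coeff r r = dual_coeff r s" using two_terms[of 0] by simp
  show ?thesis
  proof (intro conjI allI impI)
    show "dual_coeff r r \<noteq> \<theta>s 0" using g0 gs by auto
    fix i assume "i \<le> d"
    thus "ucoord s i = ucoord r i * ((\<theta>s i - dual_coeff r r) / (\<theta>s 0 - dual_coeff r r))"
      unfolding g0 using two_terms gs by (simp add: field_simps)
  qed
qed

text \<open>Conversely, the relation says \<open>A\<^sup>* y\<^sub>r = \<gamma>\<^sub>r\<^sub>r y\<^sub>r + (\<theta>\<^sup>*\<^sub>0 - \<gamma>\<^sub>r\<^sub>r) y\<^sub>s\<close> in \<open>v\<close>-coordinates, so by
  uniqueness of coordinates in the basis \<open>y\<close> the row \<open>\<gamma>\<^sub>r\<close> has its only off-diagonal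
  nonzero entry at \<open>s\<close>.\<close>
lemma relation_imp_unique_neighbour:
  assumes r: "r \<le> d" and s: "s \<le> d" and rs: "r \<noteq> s"
    and ne: "dual_coeff r r \<noteq> \<theta>s 0"
    and rel: "\<And>i. i \<le> d \<Longrightarrow> ucoord s i = ucoord r i * ((\<theta>s i - dual_coeff r r) / (\<theta>s 0 - dual_coeff r r))"
  shows "\<forall>j\<le>d. (j \<noteq> r \<and> dual_coeff r j \<noteq> 0) \<longleftrightarrow> j = s"
proof -
  define \<beta> where "\<beta> = \<theta>s 0 - dual_coeff r r"
  have \<beta>: "\<beta> \<noteq> 0" using ne unfolding \<beta>_def by simp
  define h where "h k = (if k = r then 0 else dual_coeff r k) - (if k = s then \<beta> else 0)" for k
  have "comb d h eigvec = comb d (\<lambda>i. 0) eigvec"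
  proof -
    have "(\<Sum>k\<le>d. h k * ucoord k i) = 0" if i: "i \<le> d" for i
    proof -
      have "(\<Sum>k\<le>d. h k * ucoord k i) = (\<Sum>k\<le>d. dual_coeff r k * ucoord k i
          - (if k = r then dual_coeff r r * ucoord r i else 0) - (if k = s then \<beta> * ucoord s i else 0))"
        by (rule sum.cong) (auto simp: h_def algebra_simps)
      also have "\<dots> = \<theta>s i * ucoord r i - dual_coeff r r * ucoord r i - \<beta> * ucoord s i"
        using r s dual_coeff_coords[OF r i] by (simp add: sum_subtractf)
      also have "\<beta> * ucoord s i = ucoord r i * (\<theta>s i - dual_coeff r r)" using rel[OF i] \<beta> unfolding \<beta>_def by simp
      finally show ?thesis by (simp add: algebra_simps)
    qed
    hence "comb d h eigvec = comb d (\<lambda>i. 0) v" unfolding eigvec_comb by (intro comb_cong) simp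
    thus ?thesis by (simp add: comb_zero)
  qed
  hence h0: "\<And>k. k \<le> d \<Longrightarrow> h k = 0" using indep_eq[OF eigvec_indep] by fastforce
  have "dual_coeff r s = \<beta>" using h0[OF s] rs unfolding h_def by simp
  moreover have "dual_coeff r j = 0" if "j \<le> d" "j \<noteq> r" "j \<noteq> s" for j
    using h0[of j] that unfolding h_def by simp
  ultimately show ?thesis using rs \<beta> by auto
qed

theorem adjacency_iff_u_relation:
  assumes r: "r \<le> d" and s: "s \<le> d" and rs: "r \<noteq> s"
  shows "(\<forall>j\<le>d. (j \<noteq> r \<and> E r * D * E j \<noteq> 0\<^sub>m (d+1) (d+1)) \<longleftrightarrow> j = s)
     \<longleftrightarrow> (trace_mat (E r * D) \<noteq> \<theta>s 0 \<and>
          (\<forall>i\<le>d. ucoord s i = ucoord r i * ((\<theta>s i - trace_mat (E r * D)) / (\<theta>s 0 - trace_mat (E r * D)))))"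
proof -
  have "E r * D * E j \<noteq> 0\<^sub>m (d+1) (d+1) \<longleftrightarrow> dual_coeff r j \<noteq> 0" if "j \<le> d" for j
    using EDE_zero_iff[OF r that] dual_coeff_zero_sym[OF r that] by blast
  hence "(\<forall>j\<le>d. (j \<noteq> r \<and> E r * D * E j \<noteq> 0\<^sub>m (d+1) (d+1)) \<longleftrightarrow> j = s)
     \<longleftrightarrow> (\<forall>j\<le>d. (j \<noteq> r \<and> dual_coeff r j \<noteq> 0) \<longleftrightarrow> j = s)" by auto
  thus ?thesis unfolding trace_ED[OF r]
    using unique_neighbour_imp_relation[OF r s rs] relation_imp_unique_neighbour[OF r s rs] by blast
qed

end

theorem proposition7p14:
  fixes d :: nat
    and Es :: "nat \<Rightarrow> 'a::field mat"
    and A :: "'a mat"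
    and \<theta> \<theta>s :: "nat \<Rightarrow> 'a"
    and v :: "nat \<Rightarrow> 'a vec"
    and a b c :: "nat \<Rightarrow> 'a"
    and r s :: nat
  assumes d: "d \<ge> 1"
    and Es_carrier: "\<And>i. i \<le> d \<Longrightarrow> Es i \<in> carrier_mat (d+1) (d+1)"
    and Es_orth: "\<And>i j. i \<le> d \<Longrightarrow> j \<le> d \<Longrightarrow>
                    Es i * Es j = (if i = j then Es i else 0\<^sub>m (d+1) (d+1))"
    and Es_rank: "\<And>i. i \<le> d \<Longrightarrow> vec_space.rank (d+1) (Es i) = 1"
    and A_carrier: "A \<in> carrier_mat (d+1) (d+1)"
    and A_zero: "\<And>i j. i \<le> d \<Longrightarrow> j \<le> d \<Longrightarrow> (i > j + 1 \<or> j > i + 1) \<Longrightarrow>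
                   Es i * A * Es j = 0\<^sub>m (d+1) (d+1)"
    and A_nonzero: "\<And>i j. i \<le> d \<Longrightarrow> j \<le> d \<Longrightarrow> (i = j + 1 \<or> j = i + 1) \<Longrightarrow>
                   Es i * A * Es j \<noteq> 0\<^sub>m (d+1) (d+1)"
    and \<theta>_distinct: "inj_on \<theta> {0..d}"
    and \<theta>_eig: "\<And>i. i \<le> d \<Longrightarrow> eigenvalue A (\<theta> i)"
    and v_carrier: "\<And>i. i \<le> d \<Longrightarrow> v i \<in> carrier_vec (d+1)"
    and v_feasible: "\<And>i. i \<le> d \<Longrightarrow> \<exists>w \<in> carrier_vec (d+1). v i = Es i *\<^sub>v w"
    and v_inj: "inj_on v {0..d}"
    and v_basis: "vectorspace.basis class_ring (module_vec TYPE('a) (d+1)) (v ` {0..d})"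
    and v_action: "\<And>i. i \<le> d \<Longrightarrow>
          A *\<^sub>v v i = (if i \<ge> 1 then b (i - 1) \<cdot>\<^sub>v v (i - 1) else 0\<^sub>v (d+1))
                     + a i \<cdot>\<^sub>v v i
                     + (if i < d then c (i + 1) \<cdot>\<^sub>v v (i + 1) else 0\<^sub>v (d+1))"
    and rs: "r \<le> d" "s \<le> d" "r \<noteq> s"
  shows "((\<forall>j \<le> d. (j \<noteq> r \<and> prim_idem A \<theta> d r * dual_mat d \<theta>s Es * prim_idem A \<theta> d j
                          \<noteq> 0\<^sub>m (d+1) (d+1)) \<longleftrightarrow> j = s))
         \<longleftrightarrow>
         (trace_mat (prim_idem A \<theta> d r * dual_mat d \<theta>s Es) \<noteq> \<theta>s 0 \<and>
          (\<forall>i \<le> d. poly (upoly d a b c i) (\<theta> s) =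
             poly (upoly d a b c i) (\<theta> r) *
               ((\<theta>s i - trace_mat (prim_idem A \<theta> d r * dual_mat d \<theta>s Es))
                / (\<theta>s 0 - trace_mat (prim_idem A \<theta> d r * dual_mat d \<theta>s Es)))))"
proof -
  interpret feasible_setting d Es A \<theta> \<theta>s v a b c
    by unfold_locales (fact Es_carrier Es_orth A_carrier A_nonzero \<theta>_distinct \<theta>_eig
        v_carrier v_feasible v_inj v_basis v_action)+
  show ?thesis using adjacency_iff_u_relation[OF rs] unfolding ucoord_def .
qed

end
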